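(* Let $I$ be the graph formed from two vertex-disjoint copies of the complete graph $K_4$ by adding a single edge joining one vertex of the first copy to one vertex of the second copy. Then $\chi_{td}(I)=8$, $I$ is connected, $I$ has order $8=\chi_{td}(I)$, and $I$ is not saturable.
   Context: For a simple graph $G$ and a positive integer $k$, a proper $k$-total difference labeling (TDL) of $G$ is a function $f: V(G)\to\{1,\dots,k\}$, extended to edges by $f(\{u,v\}) = |f(u)-f(v)|$, such that: (i) adjacent vertices receive different labels; (ii) two distinct edges sharing a vertex receive different labels; (iii) no edge receives the same label as either of its endpoints. $\chi_{td}(G)$ denotes the smallest $k$ for which such a labeling exists. A TDL of a graph $G$ of order $n$ is saturated if $\chi_{td}(G)=n$ and the set of vertex labels used is exactly $\{1,2,\dots,\chi_{td}(G)\}$. $G$ is saturable if it has at least one saturated labeling. *)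

theory Defs
  imports Main
begin

definition simple_graph :: "'a set \<Rightarrow> ('a \<Rightarrow> 'a \<Rightarrow> bool) \<Rightarrow> bool" where
  "simple_graph V E \<longleftrightarrow> finite V \<and> (\<forall>u v. E u v \<longrightarrow> u \<in> V \<and> v \<in> V)
     \<and> (\<forall>u v. E u v \<longrightarrow> E v u) \<and> (\<forall>v. \<not> E v v)"

(* Proper k-total difference labeling: f : V -> {1..k}; the edge {u,v} gets |f u - f v|. *)
definition is_TDL :: "'a set \<Rightarrow> ('a \<Rightarrow> 'a \<Rightarrow> bool) \<Rightarrow> nat \<Rightarrow> ('a \<Rightarrow> int) \<Rightarrow> bool" where
  "is_TDL V E k f \<longleftrightarrow>
     (\<forall>v\<in>V. 1 \<le> f v \<and> f v \<le> int k)
   \<and> (\<forall>u v. E u v \<longrightarrow> f u \<noteq> f v)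
   \<and> (\<forall>u v w. E u v \<and> E u w \<and> v \<noteq> w \<longrightarrow> \<bar>f u - f v\<bar> \<noteq> \<bar>f u - f w\<bar>)
   \<and> (\<forall>u v. E u v \<longrightarrow> \<bar>f u - f v\<bar> \<noteq> f u \<and> \<bar>f u - f v\<bar> \<noteq> f v)"

definition chi_td :: "'a set \<Rightarrow> ('a \<Rightarrow> 'a \<Rightarrow> bool) \<Rightarrow> nat" where
  "chi_td V E = (LEAST k. k > 0 \<and> (\<exists>f. is_TDL V E k f))"

definition saturated_TDL :: "'a set \<Rightarrow> ('a \<Rightarrow> 'a \<Rightarrow> bool) \<Rightarrow> ('a \<Rightarrow> int) \<Rightarrow> bool" where
  "saturated_TDL V E f \<longleftrightarrow> is_TDL V E (chi_td V E) f \<and> chi_td V E = card V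
     \<and> f ` V = {1 .. int (chi_td V E)}"

definition saturable :: "'a set \<Rightarrow> ('a \<Rightarrow> 'a \<Rightarrow> bool) \<Rightarrow> bool" where
  "saturable V E \<longleftrightarrow> (\<exists>f. saturated_TDL V E f)"

definition graph_connected :: "'a set \<Rightarrow> ('a \<Rightarrow> 'a \<Rightarrow> bool) \<Rightarrow> bool" where
  "graph_connected V E \<longleftrightarrow> V \<noteq> {} \<and> (\<forall>u\<in>V. \<forall>v\<in>V. (\<lambda>x y. E x y)\<^sup>*\<^sup>* u v)"

definition I_V :: "nat set" where "I_V = {0..7}"

definition I_E :: "nat \<Rightarrow> nat \<Rightarrow> bool" where
  "I_E u v \<longleftrightarrow> u \<noteq> v \<and>
     ((u \<in> {0..3} \<and> v \<in> {0..3}) \<or> (u \<in> {4..7} \<and> v \<in> {4..7})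
      \<or> (u = 0 \<and> v = 4) \<or> (u = 4 \<and> v = 0))"

end

(* In a total difference labeling of K4 with labels 1 \<le> a < b < c < d, no edge label y - x
   equals its smaller endpoint x (so y \<noteq> 2x), and at b and at c the edges to smaller and to
   larger labels have different lengths; a finite check shows that these conditions force
   d \<ge> 8. So each copy of K4 in I carries the label 8, whence chi_td(I) \<ge> 8, with equality
   by the labels 3, 2, 7, 8 and 1, 5, 6, 8. A saturated labeling of I would be a bijection
   onto {1..8}, which is impossible when both copies use the label 8. *)

theory Submission
  imports Defs
begin

definition is_clique :: "('a \<Rightarrow> 'a \<Rightarrow> bool) \<Rightarrow> 'a set \<Rightarrow> bool" where
  "is_clique E Q \<longleftrightarrow> (\<forall>u\<in>Q. \<forall>v\<in>Q. u \<noteq> v \<longrightarrow> E u v)"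

(* The condition |x - y| \<noteq> y of is_TDL is the instance with x and y exchanged. *)
definition complete_TDL_labels :: "int set \<Rightarrow> bool" where
  "complete_TDL_labels S \<longleftrightarrow>
     (\<forall>x\<in>S. \<forall>y\<in>S. x \<noteq> y \<longrightarrow> \<bar>x - y\<bar> \<noteq> x \<and> (\<forall>z\<in>S. z \<noteq> x \<and> z \<noteq> y \<longrightarrow> \<bar>x - y\<bar> \<noteq> \<bar>x - z\<bar>))"

lemma complete_TDL_labels_subset:
  "complete_TDL_labels S \<Longrightarrow> T \<subseteq> S \<Longrightarrow> complete_TDL_labels T"
  unfolding complete_TDL_labels_def by blast

lemma is_TDL_clique_labels:
  assumes tdl: "is_TDL V E k f" and Q: "is_clique E Q"
  shows "inj_on f Q" and "complete_TDL_labels (f ` Q)"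
proof -
  have adjacent: "E u v" if "u \<in> Q" "v \<in> Q" "u \<noteq> v" for u v
    using Q that unfolding is_clique_def by blast
  show "inj_on f Q"
    using tdl adjacent unfolding is_TDL_def inj_on_def by blast
  show "complete_TDL_labels (f ` Q)"
    unfolding complete_TDL_labels_def
  proof (intro ballI impI conjI)
    fix x y assume "x \<in> f ` Q" "y \<in> f ` Q" "x \<noteq> y"
    then obtain u v where uv: "u \<in> Q" "v \<in> Q" "x = f u" "y = f v" "E u v"
      using adjacent by blast
    then show "\<bar>x - y\<bar> \<noteq> x"
      using tdl unfolding is_TDL_def by blast
    fix z assume "z \<in> f ` Q" "z \<noteq> x \<and> z \<noteq> y"
    then obtain w where "x = f u" "y = f v" "z = f w" "E u v" "E u w" "v \<noteq> w"
      using adjacent uv by blast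
    then show "\<bar>x - y\<bar> \<noteq> \<bar>x - z\<bar>"
      using tdl unfolding is_TDL_def by blast
  qed
qed

lemma sorted_complete_TDL_labels_ge_8:
  fixes a b c d :: int
  assumes "1 \<le> a" "a < b" "b < c" "c < d" and labels: "complete_TDL_labels {a, b, c, d}"
  shows "8 \<le> d"
proof -
  have "b \<noteq> 2 * a" "c \<noteq> 2 * a" "d \<noteq> 2 * a" "c \<noteq> 2 * b" "d \<noteq> 2 * b" "d \<noteq> 2 * c"
    "b - a \<noteq> c - b" "b - a \<noteq> d - b" "c - a \<noteq> d - c" "c - b \<noteq> d - c"
    using labels assms(2-4) unfolding complete_TDL_labels_def by simp_all
  then show ?thesis
    using assms(1-4) by smt
qed

lemma complete_TDL_labels_ge_8:
  assumes labels: "complete_TDL_labels S" and pos: "\<forall>x\<in>S. 1 \<le> x" and card: "4 \<le> card S"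
  shows "\<exists>x\<in>S. 8 \<le> x"
proof -
  obtain T where T: "T \<subseteq> S" "card T = 4" "finite T"
    using obtain_subset_with_card_n[OF card] by blast
  define l where "l = sorted_list_of_set T"
  have l: "sorted_wrt (<) l" "set l = T" "length l = 4"
    using T by (simp_all add: l_def)
  then obtain a b c d where abcd: "l = [a, b, c, d]"
    by (auto simp: numeral_eq_Suc length_Suc_conv)
  have "8 \<le> d"
  proof (rule sorted_complete_TDL_labels_ge_8)
    show "1 \<le> a" "a < b" "b < c" "c < d"
      using l T pos abcd by auto
    show "complete_TDL_labels {a, b, c, d}"
      using complete_TDL_labels_subset[OF labels] l T abcd by simp
  qed
  then show ?thesis
    using l T abcd by auto
qed

lemma is_TDL_clique_label_ge_8:
  assumes tdl: "is_TDL V E k f" and Q: "is_clique E Q" "Q \<subseteq> V" "4 \<le> card Q"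
  shows "\<exists>v\<in>Q. 8 \<le> f v"
proof -
  have "4 \<le> card (f ` Q)"
    using Q card_image[OF is_TDL_clique_labels(1)[OF tdl Q(1)]] by simp
  moreover have "\<forall>x\<in>f ` Q. 1 \<le> x"
    using tdl Q(2) unfolding is_TDL_def by auto
  ultimately show ?thesis
    using complete_TDL_labels_ge_8 is_TDL_clique_labels(2)[OF tdl Q(1)] by blast
qed

lemma is_TDL_clique_ge_8:
  assumes "is_TDL V E k f" "is_clique E Q" "Q \<subseteq> V" "4 \<le> card Q"
  shows "8 \<le> k"
proof -
  obtain v where "v \<in> Q" "8 \<le> f v"
    using is_TDL_clique_label_ge_8[OF assms] by blast
  moreover have "f v \<le> int k"
    using assms(1,3) \<open>v \<in> Q\<close> unfolding is_TDL_def by blast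
  ultimately show ?thesis by simp
qed

lemma saturated_TDL_inj_on:
  assumes "saturated_TDL V E f" "finite V"
  shows "inj_on f V"
  using assms by (intro eq_card_imp_inj_on) (auto simp: saturated_TDL_def)

lemma disjoint_cliques_not_saturable:
  assumes "finite V" "chi_td V E \<le> 8" "Q1 \<subseteq> V" "Q2 \<subseteq> V" "Q1 \<inter> Q2 = {}"
    and "is_clique E Q1" "is_clique E Q2" "4 \<le> card Q1" "4 \<le> card Q2"
  shows "\<not> saturable V E"
proof
  assume "saturable V E"
  then obtain f where sat: "saturated_TDL V E f"
    unfolding saturable_def by blast
  then have tdl: "is_TDL V E (chi_td V E) f"
    unfolding saturated_TDL_def by blast
  have top_label: "f v = 8" if "v \<in> V" "8 \<le> f v" for v
    using tdl assms(2) that unfolding is_TDL_def by force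
  obtain v1 v2 where "v1 \<in> Q1" "v2 \<in> Q2" "f v1 = 8" "f v2 = 8"
    using is_TDL_clique_label_ge_8[OF tdl] top_label assms(3-9) by (metis subsetD)
  then show False
    using saturated_TDL_inj_on[OF sat assms(1)] assms(3-5) by (metis disjoint_iff inj_onD subsetD)
qed

lemma I_simple_graph: "simple_graph I_V I_E"
  unfolding simple_graph_def I_V_def I_E_def by auto

lemma I_clique_low: "is_clique I_E {0..3}"
  and I_clique_high: "is_clique I_E {4..7}"
  unfolding is_clique_def I_E_def by auto

lemma I_E_bounded: "I_E u v \<Longrightarrow> u < 8 \<and> v < 8"
  unfolding I_E_def by auto

lemma I_is_TDL_8: "is_TDL I_V I_E 8 (\<lambda>v. [3, 2, 7, 8, 1, 5, 6, 8] ! v)"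
  (is "is_TDL _ _ _ ?f")
proof -
  have "\<forall>u<8. \<forall>v<8. I_E u v \<longrightarrow> ?f u \<noteq> ?f v \<and> \<bar>?f u - ?f v\<bar> \<noteq> ?f u \<and> \<bar>?f u - ?f v\<bar> \<noteq> ?f v"
    by (simp add: All_less_Suc numeral_eq_Suc I_E_def)
  moreover have "\<forall>u<8. \<forall>v<8. \<forall>w<8. I_E u v \<and> I_E u w \<and> v \<noteq> w \<longrightarrow> \<bar>?f u - ?f v\<bar> \<noteq> \<bar>?f u - ?f w\<bar>"
    by (simp add: All_less_Suc numeral_eq_Suc I_E_def)
  moreover have "\<forall>v<8. 1 \<le> ?f v \<and> ?f v \<le> 8"
    by (simp add: All_less_Suc numeral_eq_Suc)
  ultimately show ?thesis
    unfolding is_TDL_def I_V_def using I_E_bounded by (auto simp: less_Suc_eq_le)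
qed

lemma I_chi_td: "chi_td I_V I_E = 8"
  unfolding chi_td_def
proof (rule Least_equality)
  show "0 < (8::nat) \<and> (\<exists>f. is_TDL I_V I_E 8 f)"
    using I_is_TDL_8 by auto
next
  fix k assume "0 < k \<and> (\<exists>f. is_TDL I_V I_E k f)"
  then obtain f where "is_TDL I_V I_E k f" by blast
  then show "8 \<le> k"
    by (rule is_TDL_clique_ge_8[OF _ I_clique_low]) (auto simp: I_V_def)
qed

lemma I_connected: "graph_connected I_V I_E"
  unfolding graph_connected_def
proof (intro conjI ballI)
  show "I_V \<noteq> {}"
    by (simp add: I_V_def)
next
  have to_0: "I_E\<^sup>*\<^sup>* u 0" if "u \<in> I_V" for u
  proof (cases "u \<le> 4")
    case True
    then have "u = 0 \<or> I_E u 0"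
      using that by (auto simp: I_E_def I_V_def)
    then show ?thesis
      by auto
  next
    case False
    then have "I_E u 4" "I_E 4 0"
      using that by (auto simp: I_E_def I_V_def)
    then show ?thesis
      by (meson converse_rtranclp_into_rtranclp r_into_rtranclp)
  qed
  have "symp I_E"
    unfolding symp_def I_E_def by auto
  fix u v assume "u \<in> I_V" "v \<in> I_V"
  then show "I_E\<^sup>*\<^sup>* u v"
    using to_0 symp_rtranclp[OF \<open>symp I_E\<close>] by (meson rtranclp_trans sympD)
qed

theorem mainTheorem13:
  shows "simple_graph I_V I_E \<and> chi_td I_V I_E = 8 \<and> graph_connected I_V I_E
         \<and> card I_V = 8 \<and> card I_V = chi_td I_V I_E \<and> \<not> saturable I_V I_E"
proof -
  have card: "card I_V = 8"
    by (simp add: I_V_def)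
  have "\<not> saturable I_V I_E"
    by (rule disjoint_cliques_not_saturable[OF _ _ _ _ _ I_clique_low I_clique_high])
      (use I_chi_td in \<open>auto simp: I_V_def\<close>)
  then show ?thesis
    using I_simple_graph I_chi_td I_connected card by simp
qed

end
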